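(* Let $X$ be a real Banach space, $\tau$ the norm or weak topology, and suppose $X$ is $\tau$-ALUR. Then for every $N\in\mathbb{N}$ and every strictly convex monotone norm $\gamma:\mathbb{R}^N\to[0,\infty)$, the space $\ell_\gamma^N(X)$ is $\tau$-ALUR.
   Context: A norm $\gamma$ on $\mathbb{R}^N$ is monotone if $0\le a\le b$ coordinatewise implies $\gamma(a)\le\gamma(b)$. $\ell_\gamma^N(X)$ is $X^N$ with norm $|||(x_1,\dots,x_N)|||=\gamma(\|x_1\|,\dots,\|x_N\|)$, with $\tau$ on it being the corresponding norm or weak topology. A Banach space $Z$ is $\tau$-almost locally uniformly rotund ($\tau$-ALUR) if whenever $x,x_n\in S_Z$ and $h_m\in S_{Z^*}$ satisfy $\lim_m\lim_n h_m(\frac{x_n+x}{2})=1$, we have $x_n\to x$ in $\tau$. *)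

theory Defs
  imports "HOL-Analysis.Analysis"
begin

definition nrm_bounded_functional :: "('v::real_vector \<Rightarrow> real) \<Rightarrow> ('v \<Rightarrow> real) \<Rightarrow> bool" where
  "nrm_bounded_functional nrm h \<longleftrightarrow> linear h \<and> (\<exists>C. \<forall>v. \<bar>h v\<bar> \<le> C * nrm v)"

definition dual_norm :: "('v::real_vector \<Rightarrow> real) \<Rightarrow> ('v \<Rightarrow> real) \<Rightarrow> real" where
  "dual_norm nrm h = Sup {\<bar>h v\<bar> | v. nrm v \<le> 1}"

definition dual_sphere :: "('v::real_vector \<Rightarrow> real) \<Rightarrow> ('v \<Rightarrow> real) \<Rightarrow> bool" where
  "dual_sphere nrm h \<longleftrightarrow> nrm_bounded_functional nrm h \<and> dual_norm nrm h = 1"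

datatype topo = NormTop | WeakTop

definition tau_conv :: "topo \<Rightarrow> ('v::real_vector \<Rightarrow> real) \<Rightarrow> (nat \<Rightarrow> 'v) \<Rightarrow> 'v \<Rightarrow> bool" where
  "tau_conv t nrm xs x \<longleftrightarrow>
     (case t of
        NormTop \<Rightarrow> ((\<lambda>n. nrm (xs n - x)) \<longlonglongrightarrow> 0)
      | WeakTop \<Rightarrow> (\<forall>h. nrm_bounded_functional nrm h \<longrightarrow> ((\<lambda>n. h (xs n)) \<longlonglongrightarrow> h x)))"

definition tau_ALUR :: "topo \<Rightarrow> ('v::real_vector \<Rightarrow> real) \<Rightarrow> bool" where
  "tau_ALUR t nrm \<longleftrightarrow>
     (\<forall>x xs hs. nrm x = 1 \<and> (\<forall>n. nrm (xs n) = 1) \<and> (\<forall>m. dual_sphere nrm (hs m)) \<and>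
        (\<exists>L. (\<forall>m. (\<lambda>n. hs m ((1/2) *\<^sub>R (xs n + x))) \<longlonglongrightarrow> L m) \<and> L \<longlonglongrightarrow> 1)
        \<longrightarrow> tau_conv t nrm xs x)"

definition is_norm_fun :: "('b::real_vector \<Rightarrow> real) \<Rightarrow> bool" where
  "is_norm_fun g \<longleftrightarrow> (\<forall>x. 0 \<le> g x) \<and> (\<forall>x. g x = 0 \<longleftrightarrow> x = 0) \<and>
     (\<forall>c x. g (c *\<^sub>R x) = \<bar>c\<bar> * g x) \<and> (\<forall>x y. g (x + y) \<le> g x + g y)"

definition monotone_norm :: "(real^'n \<Rightarrow> real) \<Rightarrow> bool" where
  "monotone_norm g \<longleftrightarrow> (\<forall>a b. (\<forall>i. 0 \<le> a $ i \<and> a $ i \<le> b $ i) \<longrightarrow> g a \<le> g b)"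

definition strictly_convex_norm :: "('b::real_vector \<Rightarrow> real) \<Rightarrow> bool" where
  "strictly_convex_norm g \<longleftrightarrow>
     (\<forall>x y. g x = 1 \<and> g y = 1 \<and> x \<noteq> y \<longrightarrow> g ((1/2) *\<^sub>R (x + y)) < 1)"

definition lgamma_norm :: "(real^'n \<Rightarrow> real) \<Rightarrow> ('a::real_normed_vector)^'n \<Rightarrow> real" where
  "lgamma_norm g x = g (\<chi> i. norm (x $ i))"

end

theory Submission
  imports Defs "HOL-Library.Diagonal_Subsequence"
begin

text \<open>
  Write \<open>|y|\<close> for the vector of coordinate norms of \<open>y \<in> X\<^sup>N\<close>, and \<open>\<psi>\<^sub>j\<close> for the
  dual norm of the restriction \<open>h (axis j \<cdot>)\<close> of a functional \<open>h\<close> on \<open>l\<^sub>\<gamma>\<^sup>N(X)\<close>;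
  if \<open>h\<close> has norm at most 1, then \<open>\<Sum>\<^sub>j \<psi>\<^sub>j a\<^sub>j \<le> \<gamma> a\<close> for every \<open>a \<ge> 0\<close>.

  The functionals \<open>h\<^sub>m\<close> force \<open>\<gamma> |(x\<^sub>n + x)/2| \<rightarrow> 1\<close>. Since \<open>\<gamma>\<close> is monotone and
  strictly convex on the finite-dimensional space \<open>\<real>\<^sup>N\<close>, this gives \<open>|x\<^sub>n| \<rightarrow> |x|\<close> and
  \<open>|(x\<^sub>n + x)/2| \<rightarrow> |x|\<close>. As \<open>\<tau>\<close>-convergence in \<open>l\<^sub>\<gamma>\<^sup>N(X)\<close> is coordinatewise, it remains
  to treat a coordinate \<open>i\<close> with \<open>\<beta> = norm (x $ i) > 0\<close>. Deleting the \<open>i\<close>-th entry of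
  \<open>|x|\<close> lowers \<open>\<gamma>\<close> strictly, which keeps \<open>\<psi>\<^sub>i\<close> of \<open>h\<^sub>m\<close> away from 0 for large \<open>m\<close>.
  The normalised restrictions \<open>h\<^sub>m (axis i \<cdot>) / \<psi>\<^sub>i\<close> then almost norm the midpoints of
  the directions of the \<open>i\<close>-th coordinates of \<open>x\<^sub>n\<close> and \<open>x\<close>, so the \<open>\<tau>\<close>-ALUR property
  of \<open>X\<close> makes these directions converge.
\<close>

section \<open>Dual norms\<close>

definition nonneg_homogeneous :: "('v::real_vector \<Rightarrow> real) \<Rightarrow> bool" where
  "nonneg_homogeneous nrm \<longleftrightarrow> (\<forall>v. 0 \<le> nrm v) \<and> (\<forall>c v. nrm (c *\<^sub>R v) = \<bar>c\<bar> * nrm v)"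

lemma nonneg_homogeneous_norm: "nonneg_homogeneous (norm :: 'a::real_normed_vector \<Rightarrow> real)"
  unfolding nonneg_homogeneous_def by simp

lemma nonneg_homogeneous_zero: "nonneg_homogeneous nrm \<Longrightarrow> nrm 0 = 0"
  unfolding nonneg_homogeneous_def by (metis abs_zero mult_zero_left scale_zero_left)

lemma nrm_bounded_functional_linear: "nrm_bounded_functional nrm h \<Longrightarrow> linear h"
  unfolding nrm_bounded_functional_def by blast

lemma bdd_above_dual_norm_set:
  assumes "nrm_bounded_functional nrm h" "nonneg_homogeneous nrm"
  shows "bdd_above {\<bar>h v\<bar> | v. nrm v \<le> 1}"
proof -
  obtain C where C: "\<And>v. \<bar>h v\<bar> \<le> C * nrm v"
    using assms(1) unfolding nrm_bounded_functional_def by blast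
  have "\<bar>h v\<bar> \<le> \<bar>C\<bar>" if "nrm v \<le> 1" for v
  proof -
    have "0 \<le> nrm v" using assms(2) unfolding nonneg_homogeneous_def by blast
    then have "C * nrm v \<le> \<bar>C\<bar> * nrm v" by (intro mult_right_mono) auto
    also have "\<dots> \<le> \<bar>C\<bar>" using that \<open>0 \<le> nrm v\<close> by (simp add: mult_left_le)
    finally show ?thesis using C order_trans by blast
  qed
  then show ?thesis by (intro bdd_aboveI[of _ "\<bar>C\<bar>"]) blast
qed

lemma abs_le_dual_norm:
  assumes "nrm_bounded_functional nrm h" "nonneg_homogeneous nrm" "nrm v \<le> 1"
  shows "\<bar>h v\<bar> \<le> dual_norm nrm h"
  unfolding dual_norm_def using assms by (intro cSup_upper bdd_above_dual_norm_set) auto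

lemma dual_norm_le:
  assumes "nonneg_homogeneous nrm" "\<And>v. nrm v \<le> 1 \<Longrightarrow> \<bar>h v\<bar> \<le> B"
  shows "dual_norm nrm h \<le> B"
  unfolding dual_norm_def using assms nonneg_homogeneous_zero[OF assms(1)]
  by (intro cSup_least) (auto intro!: exI[of _ 0])

lemma abs_le_dual_norm_mult:
  assumes "nrm_bounded_functional nrm h" "nonneg_homogeneous nrm"
  shows "\<bar>h v\<bar> \<le> dual_norm nrm h * nrm v"
proof (cases "nrm v = 0")
  case True
  obtain C where "\<And>v. \<bar>h v\<bar> \<le> C * nrm v"
    using assms(1) unfolding nrm_bounded_functional_def by blast
  then show ?thesis using True by (metis abs_le_zero_iff mult_zero_right)
next
  case False
  then have pos: "0 < nrm v"
    using assms(2) unfolding nonneg_homogeneous_def by (metis order_le_less)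
  have "nrm ((1 / nrm v) *\<^sub>R v) = 1"
    using assms(2) pos unfolding nonneg_homogeneous_def by simp
  then have "\<bar>h ((1 / nrm v) *\<^sub>R v)\<bar> \<le> dual_norm nrm h"
    using assms by (intro abs_le_dual_norm) auto
  moreover have "h ((1 / nrm v) *\<^sub>R v) = h v / nrm v"
    using nrm_bounded_functional_linear[OF assms(1)] by (simp add: linear_scale)
  ultimately show ?thesis using pos by (simp add: divide_le_eq)
qed

lemma dual_norm_approx:
  assumes "nrm_bounded_functional nrm h" "nonneg_homogeneous nrm" "0 < e"
  obtains v where "nrm v \<le> 1" "dual_norm nrm h - e < h v"
proof -
  have "\<exists>y\<in>{\<bar>h v\<bar> | v. nrm v \<le> 1}. dual_norm nrm h - e < y"
    unfolding dual_norm_def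
    by (rule less_cSupD)
      (use assms nonneg_homogeneous_zero[OF assms(2)] in \<open>auto intro!: exI[of _ 0]\<close>)
  then obtain v where v: "nrm v \<le> 1" "dual_norm nrm h - e < \<bar>h v\<bar>" by blast
  have "nrm (- v) = nrm v"
    using assms(2) unfolding nonneg_homogeneous_def
    by (metis abs_minus_cancel abs_one mult_1 scaleR_minus1_left)
  moreover have "h (- v) = - h v"
    using nrm_bounded_functional_linear[OF assms(1)] by (simp add: linear_neg)
  ultimately show ?thesis
    using that[of v] that[of "- v"] v by (cases "0 \<le> h v") auto
qed

lemma dual_sphere_normalize:
  assumes "nrm_bounded_functional nrm h" "nonneg_homogeneous nrm" "0 < dual_norm nrm h"
  shows "dual_sphere nrm (\<lambda>v. h v / dual_norm nrm h)"
proof -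
  let ?d = "dual_norm nrm h"
  have "linear (\<lambda>v. h v / ?d)"
    using nrm_bounded_functional_linear[OF assms(1)]
    by (intro linearI) (simp_all add: linear_add linear_scale add_divide_distrib)
  moreover have "\<bar>h v / ?d\<bar> \<le> 1 * nrm v" for v
    using abs_le_dual_norm_mult[OF assms(1,2), of v] assms(3)
    by (simp add: abs_divide divide_le_eq mult.commute)
  ultimately have bf: "nrm_bounded_functional nrm (\<lambda>v. h v / ?d)"
    unfolding nrm_bounded_functional_def by blast
  have "dual_norm nrm (\<lambda>v. h v / ?d) \<le> 1"
    using abs_le_dual_norm[OF assms(1,2)] assms(3)
    by (intro dual_norm_le[OF assms(2)]) (simp add: abs_divide)
  moreover have "?d \<le> ?d * dual_norm nrm (\<lambda>v. h v / ?d)"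
    using abs_le_dual_norm[OF bf assms(2)] assms(3)
    by (intro dual_norm_le[OF assms(2)]) (simp add: abs_divide divide_le_eq mult.commute)
  ultimately show ?thesis
    using bf assms(3) by (simp add: dual_sphere_def)
qed

lemma dual_sphere_abs_le_1:
  assumes "dual_sphere nrm g" "nonneg_homogeneous nrm" "nrm v \<le> 1"
  shows "\<bar>g v\<bar> \<le> 1"
  using abs_le_dual_norm[of nrm g v] assms by (simp add: dual_sphere_def)

lemma bounded_linear_if_nrm_bounded_functional:
  "nrm_bounded_functional norm h \<Longrightarrow> bounded_linear h"
proof -
  assume "nrm_bounded_functional norm h"
  then obtain C where "linear h" "\<And>v. \<bar>h v\<bar> \<le> C * norm v"
    unfolding nrm_bounded_functional_def by blast
  then show "bounded_linear h"
    by (intro bounded_linear_intro[of h C]) (auto simp: linear_add linear_scale mult.commute)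
qed

section \<open>Subsequences and \<open>\<tau>\<close>-convergence\<close>

lemma LIMSEQ_if_subseq_subseq:
  fixes X :: "nat \<Rightarrow> 'b::topological_space"
  assumes "\<And>r :: nat \<Rightarrow> nat. strict_mono r \<Longrightarrow>
    \<exists>r' :: nat \<Rightarrow> nat. strict_mono r' \<and> (\<lambda>n. X (r (r' n))) \<longlonglongrightarrow> l"
  shows "X \<longlonglongrightarrow> l"
proof (rule topological_tendstoI, rule ccontr)
  fix S assume S: "open S" "l \<in> S" and not_ev: "\<not> eventually (\<lambda>n. X n \<in> S) sequentially"
  obtain r :: "nat \<Rightarrow> nat" where r: "strict_mono r" "\<forall>n. X (r n) \<notin> S"
    using not_eventually_sequentiallyD[OF not_ev] by blast
  obtain r' where "(\<lambda>n. X (r (r' n))) \<longlonglongrightarrow> l" using assms[OF r(1)] by blast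
  then have "eventually (\<lambda>n. X (r (r' n)) \<in> S) sequentially"
    using S by (rule topological_tendstoD)
  then show False using r(2) by (auto simp: eventually_sequentially)
qed

lemma LIMSEQ_if_bounded_and_subseq_limits_eq:
  fixes X :: "nat \<Rightarrow> 'b::heine_borel"
  assumes "bounded (range X)"
    and "\<And>(r :: nat \<Rightarrow> nat) l. strict_mono r \<Longrightarrow> (\<lambda>n. X (r n)) \<longlonglongrightarrow> l \<Longrightarrow> l = b"
  shows "X \<longlonglongrightarrow> b"
proof (rule LIMSEQ_if_subseq_subseq)
  fix r :: "nat \<Rightarrow> nat" assume r: "strict_mono r"
  have "bounded (range (X \<circ> r))" using assms(1) by (rule bounded_subset) auto
  then obtain l r' where r': "strict_mono r'" "(X \<circ> r \<circ> r') \<longlonglongrightarrow> l"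
    using bounded_imp_convergent_subsequence by blast
  moreover have "strict_mono (r \<circ> r')" using r r'(1) by (rule strict_mono_o)
  ultimately have "l = b" using assms(2)[of "r \<circ> r'"] by (simp add: o_def)
  then show "\<exists>r'. strict_mono r' \<and> (\<lambda>n. X (r (r' n))) \<longlonglongrightarrow> b"
    using r' by (auto simp: o_def)
qed

lemma diagonal_subseq_convergent:
  fixes v :: "nat \<Rightarrow> nat \<Rightarrow> real"
  assumes "\<And>k n. \<bar>v k n\<bar> \<le> B"
  obtains r where "strict_mono r" "\<And>k. convergent (\<lambda>j. v k (r j))"
proof -
  interpret subseqs "\<lambda>k s. convergent (\<lambda>j. v k (s j))"
  proof
    fix k and s :: "nat \<Rightarrow> nat"
    have "bounded (range (\<lambda>j. v k (s j)))"
      unfolding bounded_iff using assms by (auto intro!: exI[of _ B])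
    then obtain l r where "strict_mono r" "((\<lambda>j. v k (s j)) \<circ> r) \<longlonglongrightarrow> l"
      using bounded_imp_convergent_subsequence by blast
    then show "\<exists>r'. strict_mono r' \<and> convergent (\<lambda>j. v k ((s \<circ> r') j))"
      by (auto simp: convergent_def o_def)
  qed
  have "convergent (\<lambda>j. v k (diagseq j))" for k
  proof -
    have "convergent (\<lambda>j. v k ((diagseq \<circ> (+) (Suc k)) j))"
      by (rule diagseq_holds) (auto dest: convergent_subseq_convergent simp: o_def)
    then obtain l where "(\<lambda>j. v k (diagseq (j + Suc k))) \<longlonglongrightarrow> l"
      by (auto simp: convergent_def o_def add.commute)
    then have "(\<lambda>j. v k (diagseq j)) \<longlonglongrightarrow> l" by (rule LIMSEQ_offset)
    then show ?thesis by (auto simp: convergent_def)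
  qed
  then show ?thesis using that subseq_diagseq by blast
qed

lemma tau_conv_NormTop_iff: "tau_conv NormTop norm xs x \<longleftrightarrow> xs \<longlonglongrightarrow> x"
  by (simp add: tau_conv_def tendsto_norm_zero_iff LIM_zero_iff)

lemma tau_conv_WeakTop_iff:
  "tau_conv WeakTop norm xs x \<longleftrightarrow>
     (\<forall>h. nrm_bounded_functional norm h \<longrightarrow> (\<lambda>n. h (xs n)) \<longlonglongrightarrow> h x)"
  by (simp add: tau_conv_def)

lemma tau_conv_if_tendsto:
  fixes xs :: "nat \<Rightarrow> 'a::real_normed_vector"
  assumes "xs \<longlonglongrightarrow> x"
  shows "tau_conv t norm xs x"
proof (cases t)
  case NormTop then show ?thesis using assms by (simp add: tau_conv_NormTop_iff)
next
  case WeakTop then show ?thesis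
    using assms
    by (auto simp: tau_conv_WeakTop_iff
        intro: bounded_linear.tendsto[OF bounded_linear_if_nrm_bounded_functional])
qed

lemma tau_conv_scaleR:
  fixes us :: "nat \<Rightarrow> 'a::real_normed_vector"
  assumes "tau_conv t norm us u" and "r \<longlonglongrightarrow> \<beta>"
  shows "tau_conv t norm (\<lambda>n. r n *\<^sub>R us n) (\<beta> *\<^sub>R u)"
proof (cases t)
  case NormTop then show ?thesis
    using assms by (simp add: tau_conv_NormTop_iff tendsto_scaleR)
next
  case WeakTop then show ?thesis
    using assms by (auto simp: tau_conv_WeakTop_iff linear_scale[OF nrm_bounded_functional_linear]
        intro: tendsto_mult)
qed

lemma tau_conv_if_subseq_subseq:
  fixes xs :: "nat \<Rightarrow> 'a::real_normed_vector"
  assumes "\<And>r :: nat \<Rightarrow> nat. strict_mono r \<Longrightarrow>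
    \<exists>r' :: nat \<Rightarrow> nat. strict_mono r' \<and> tau_conv t norm (\<lambda>n. xs (r (r' n))) x"
  shows "tau_conv t norm xs x"
proof (cases t)
  case NormTop
  have "xs \<longlonglongrightarrow> x"
  proof (rule LIMSEQ_if_subseq_subseq)
    fix r :: "nat \<Rightarrow> nat" assume "strict_mono r"
    then show "\<exists>r'. strict_mono r' \<and> (\<lambda>n. xs (r (r' n))) \<longlonglongrightarrow> x"
      using assms[OF \<open>strict_mono r\<close>] NormTop by (simp add: tau_conv_NormTop_iff)
  qed
  then show ?thesis using NormTop by (simp add: tau_conv_NormTop_iff)
next
  case WeakTop
  have "(\<lambda>n. h (xs n)) \<longlonglongrightarrow> h x" if "nrm_bounded_functional norm h" for h
    by (rule LIMSEQ_if_subseq_subseq)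
      (use assms WeakTop that in \<open>fastforce simp: tau_conv_WeakTop_iff\<close>)
  then show ?thesis using WeakTop by (simp add: tau_conv_WeakTop_iff)
qed

lemma tau_ALURD:
  assumes "tau_ALUR t nrm" "nrm x = 1" "\<And>n. nrm (xs n) = 1" "\<And>m. dual_sphere nrm (hs m)"
    and "\<And>m. (\<lambda>n. hs m ((1/2) *\<^sub>R (xs n + x))) \<longlonglongrightarrow> L m" "L \<longlonglongrightarrow> 1"
  shows "tau_conv t nrm xs x"
proof -
  have "nrm x = 1 \<and> (\<forall>n. nrm (xs n) = 1) \<and> (\<forall>m. dual_sphere nrm (hs m)) \<and>
      (\<exists>L. (\<forall>m. (\<lambda>n. hs m ((1/2) *\<^sub>R (xs n + x))) \<longlonglongrightarrow> L m) \<and> L \<longlonglongrightarrow> 1)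
      \<longrightarrow> tau_conv t nrm xs x"
    using assms(1) unfolding tau_ALUR_def by (rule spec[of _ hs, OF spec[of _ xs, OF spec[of _ x]]])
  then show ?thesis using assms(2-6) by blast
qed

text \<open>The definition of \<open>\<tau>\<close>-ALUR requires the inner limits to exist; they do along a
  diagonal subsequence.\<close>

lemma tau_ALUR_subseq_tau_conv:
  fixes x :: "'a::real_normed_vector" and xs :: "nat \<Rightarrow> 'a"
  assumes ALUR: "tau_ALUR t (norm :: 'a \<Rightarrow> real)" and "norm x = 1" "\<And>n. norm (xs n) = 1"
    and norming: "\<And>\<epsilon>. 0 < \<epsilon> \<Longrightarrow>
      \<exists>g. dual_sphere norm g \<and> (\<forall>\<^sub>F n in sequentially. 1 - \<epsilon> < g ((1/2) *\<^sub>R (xs n + x)))"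
  obtains r :: "nat \<Rightarrow> nat" where "strict_mono r" "tau_conv t norm (\<lambda>n. xs (r n)) x"
proof -
  obtain G where G: "\<And>k. dual_sphere norm (G k)"
    "\<And>k. \<forall>\<^sub>F n in sequentially. 1 - inverse (Suc k) < G k ((1/2) *\<^sub>R (xs n + x))"
  proof -
    have "\<forall>k. \<exists>g. dual_sphere norm g \<and>
        (\<forall>\<^sub>F n in sequentially. 1 - inverse (Suc k) < g ((1/2) *\<^sub>R (xs n + x)))"
      using norming by simp
    then show ?thesis using that by metis
  qed
  have G_le_1: "\<bar>G k ((1/2) *\<^sub>R (xs n + x))\<bar> \<le> 1" for k n
    using assms(2,3) norm_triangle_ineq[of "xs n" x]
    by (intro dual_sphere_abs_le_1[OF G(1) nonneg_homogeneous_norm]) simp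
  obtain r where r: "strict_mono r" and conv: "\<And>k. convergent (\<lambda>j. G k ((1/2) *\<^sub>R (xs (r j) + x)))"
    using diagonal_subseq_convergent[of "\<lambda>k n. G k ((1/2) *\<^sub>R (xs n + x))" 1] G_le_1 by metis
  define L where "L k = lim (\<lambda>j. G k ((1/2) *\<^sub>R (xs (r j) + x)))" for k
  have L: "(\<lambda>j. G k ((1/2) *\<^sub>R (xs (r j) + x))) \<longlonglongrightarrow> L k" for k
    using conv[of k] by (simp add: L_def convergent_LIMSEQ_iff)
  have L_le_1: "L k \<le> 1" for k
    using L[of k] G_le_1 by (intro LIMSEQ_le_const2) (auto simp: abs_le_iff)
  have L_ge: "1 - inverse (Suc k) \<le> L k" for k
  proof -
    from eventually_subseq[OF r G(2)[of k]]
    have "\<forall>\<^sub>F j in sequentially. 1 - inverse (Suc k) \<le> G k ((1/2) *\<^sub>R (xs (r j) + x))"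
      by (rule eventually_mono) simp
    then show ?thesis by (intro tendsto_lowerbound[OF L[of k]]) simp_all
  qed
  have lower_tendsto: "(\<lambda>k. 1 - inverse (real (Suc k))) \<longlonglongrightarrow> 1"
    using tendsto_diff[OF tendsto_const LIMSEQ_inverse_real_of_nat, of 1] by simp
  have "L \<longlonglongrightarrow> 1"
    by (rule real_tendsto_sandwich[OF _ _ lower_tendsto tendsto_const])
      (use L_le_1 L_ge in \<open>auto intro: always_eventually\<close>)
  then have "tau_conv t norm (\<lambda>n. xs (r n)) x"
    using assms(2,3) G(1) L by (intro tau_ALURD[OF ALUR])
  then show ?thesis using r that by blast
qed

lemma tau_ALUR_tau_conv_if_norming:
  fixes x :: "'a::real_normed_vector" and xs :: "nat \<Rightarrow> 'a"
  assumes ALUR: "tau_ALUR t (norm :: 'a \<Rightarrow> real)" and "norm x = 1" "\<And>n. norm (xs n) = 1"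
    and norming: "\<And>\<epsilon>. 0 < \<epsilon> \<Longrightarrow>
      \<exists>g. dual_sphere norm g \<and> (\<forall>\<^sub>F n in sequentially. 1 - \<epsilon> < g ((1/2) *\<^sub>R (xs n + x)))"
  shows "tau_conv t norm xs x"
proof (rule tau_conv_if_subseq_subseq)
  fix r :: "nat \<Rightarrow> nat" assume r: "strict_mono r"
  have norming_r: "\<exists>g. dual_sphere norm g \<and>
      (\<forall>\<^sub>F n in sequentially. 1 - \<epsilon> < g ((1/2) *\<^sub>R (xs (r n) + x)))"
    if eps: "0 < \<epsilon>" for \<epsilon>
  proof -
    obtain g where g: "dual_sphere norm g" "\<forall>\<^sub>F n in sequentially. 1 - \<epsilon> < g ((1/2) *\<^sub>R (xs n + x))"
      using norming[OF eps] by blast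
    show ?thesis using g(1) eventually_subseq[OF r g(2)] by blast
  qed
  obtain r' where "strict_mono r'" "tau_conv t norm (\<lambda>n. xs (r (r' n))) x"
    using tau_ALUR_subseq_tau_conv[OF ALUR assms(2) assms(3) norming_r] by blast
  then show "\<exists>r'. strict_mono r' \<and> tau_conv t norm (\<lambda>n. xs (r (r' n))) x" by blast
qed

lemma midpoint_functional_lower_bound:
  fixes g :: "'a::real_normed_vector \<Rightarrow> real"
  assumes "dual_sphere norm g" "norm w = 1"
  shows "g ((1/2) *\<^sub>R (r *\<^sub>R w + \<beta> *\<^sub>R u)) - \<bar>\<beta> - r\<bar> / 2 \<le> \<beta> * g ((1/2) *\<^sub>R (w + u))"
proof -
  have lin: "linear g"
    using assms(1) nrm_bounded_functional_linear by (auto simp: dual_sphere_def)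
  have "\<bar>g w\<bar> \<le> 1"
    using assms by (intro dual_sphere_abs_le_1[OF _ nonneg_homogeneous_norm]) simp_all
  then have "\<bar>(\<beta> - r) / 2 * g w\<bar> \<le> \<bar>\<beta> - r\<bar> / 2"
    by (simp add: abs_mult mult_left_le)
  moreover have "\<beta> *\<^sub>R ((1/2) *\<^sub>R (w + u)) = (1/2) *\<^sub>R (r *\<^sub>R w + \<beta> *\<^sub>R u) + ((\<beta> - r) / 2) *\<^sub>R w"
    by (simp add: scaleR_add_right scaleR_diff_left diff_divide_distrib scaleR_scaleR algebra_simps)
  then have "g (\<beta> *\<^sub>R ((1/2) *\<^sub>R (w + u))) = g ((1/2) *\<^sub>R (r *\<^sub>R w + \<beta> *\<^sub>R u) + ((\<beta> - r) / 2) *\<^sub>R w)"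
    by simp
  then have "\<beta> * g ((1/2) *\<^sub>R (w + u)) = g ((1/2) *\<^sub>R (r *\<^sub>R w + \<beta> *\<^sub>R u)) + (\<beta> - r) / 2 * g w"
    by (simp only: linear_add[OF lin] linear_scale[OF lin] real_scaleR_def)
  ultimately show ?thesis by (simp add: abs_le_iff)
qed

section \<open>Monotone strictly convex norms on \<open>\<real>\<^sup>N\<close>\<close>

locale monotone_strictly_convex_norm =
  fixes \<gamma> :: "real^'n \<Rightarrow> real"
  assumes norm_fun: "is_norm_fun \<gamma>" and monotone: "monotone_norm \<gamma>"
    and strictly_convex: "strictly_convex_norm \<gamma>"
begin

lemma gamma_nonneg: "0 \<le> \<gamma> v"
  using norm_fun unfolding is_norm_fun_def by blast

lemma gamma_eq_0_iff: "\<gamma> v = 0 \<longleftrightarrow> v = 0"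
  using norm_fun unfolding is_norm_fun_def by blast

lemma gamma_scaleR: "\<gamma> (c *\<^sub>R v) = \<bar>c\<bar> * \<gamma> v"
  using norm_fun unfolding is_norm_fun_def by blast

lemma gamma_triangle: "\<gamma> (v + w) \<le> \<gamma> v + \<gamma> w"
  using norm_fun unfolding is_norm_fun_def by blast

lemma gamma_mono: "(\<And>i. 0 \<le> v $ i) \<Longrightarrow> (\<And>i. v $ i \<le> w $ i) \<Longrightarrow> \<gamma> v \<le> \<gamma> w"
  using monotone unfolding monotone_norm_def by blast

lemma gamma_midpoint_less_1: "\<gamma> v = 1 \<Longrightarrow> \<gamma> w = 1 \<Longrightarrow> v \<noteq> w \<Longrightarrow> \<gamma> ((1/2) *\<^sub>R (v + w)) < 1"
  using strictly_convex unfolding strictly_convex_norm_def by blast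

lemma gamma_midpoint_le: "\<gamma> ((1/2) *\<^sub>R (v + w)) \<le> (\<gamma> v + \<gamma> w) / 2"
  using gamma_triangle[of v w] by (simp add: gamma_scaleR)

lemma continuous_on_gamma: "continuous_on UNIV \<gamma>"
proof (rule convex_on_continuous)
  show "convex_on UNIV \<gamma>"
  proof (rule convex_onI)
    fix t :: real and v w assume "0 < t" "t < 1"
    then show "\<gamma> ((1 - t) *\<^sub>R v + t *\<^sub>R w) \<le> (1 - t) * \<gamma> v + t * \<gamma> w"
      using gamma_triangle[of "(1 - t) *\<^sub>R v" "t *\<^sub>R w"] by (simp add: gamma_scaleR)
  qed simp
qed simp

lemma tendsto_gamma: "(f \<longlongrightarrow> a) F \<Longrightarrow> ((\<lambda>n. \<gamma> (f n)) \<longlongrightarrow> \<gamma> a) F"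
  using continuous_on_gamma
  by (auto intro: isCont_tendsto_compose simp: continuous_on_eq_continuous_at)

lemma gamma_axis: "\<gamma> (axis i c) = \<bar>c\<bar> * \<gamma> (axis i 1)"
proof -
  have "axis i c = c *\<^sub>R axis i (1::real)" by (simp add: vec_eq_iff axis_def)
  then show ?thesis by (simp add: gamma_scaleR)
qed

lemma gamma_axis_pos: "0 < \<gamma> (axis i 1)"
  using gamma_nonneg[of "axis i 1"] gamma_eq_0_iff[of "axis i 1"] by (simp add: axis_eq_0_iff)

lemma component_le_gamma:
  assumes "\<And>j. 0 \<le> v $ j"
  shows "v $ i * \<gamma> (axis i 1) \<le> \<gamma> v"
proof -
  have "\<gamma> (axis i (v $ i)) \<le> \<gamma> v" by (rule gamma_mono) (auto simp: axis_def assms)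
  with assms[of i] gamma_axis[of i "v $ i"] show ?thesis by simp
qed

lemma bounded_nonneg_gamma_le_1: "bounded {v. (\<forall>i. 0 \<le> v $ i) \<and> \<gamma> v \<le> 1}"
proof -
  have "norm v \<le> (\<Sum>i\<in>UNIV. 1 / \<gamma> (axis i 1))" if "\<forall>i. 0 \<le> v $ i" "\<gamma> v \<le> 1" for v
  proof -
    have "norm v \<le> (\<Sum>i\<in>UNIV. \<bar>v $ i\<bar>)" by (rule norm_le_l1_cart)
    also have "\<dots> \<le> (\<Sum>i\<in>UNIV. 1 / \<gamma> (axis i 1))"
    proof (rule sum_mono)
      fix i
      have "v $ i * \<gamma> (axis i 1) \<le> 1"
        using component_le_gamma[of v i] that by fastforce
      then show "\<bar>v $ i\<bar> \<le> 1 / \<gamma> (axis i 1)"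
        using that(1) gamma_axis_pos[of i] by (simp add: le_divide_eq)
    qed
    finally show ?thesis .
  qed
  then show ?thesis unfolding bounded_iff by blast
qed

lemma eq_if_le_and_gamma_eq_1:
  assumes "\<And>i. 0 \<le> v $ i" "\<And>i. v $ i \<le> w $ i" "\<gamma> v = 1" "\<gamma> w = 1"
  shows "v = w"
proof (rule ccontr)
  assume "v \<noteq> w"
  then have "\<gamma> ((1/2) *\<^sub>R (v + w)) < 1" using assms(3,4) gamma_midpoint_less_1 by blast
  moreover have "\<gamma> v \<le> \<gamma> ((1/2) *\<^sub>R (v + w))" using assms(1,2) by (intro gamma_mono) auto
  ultimately show False using assms(3) by simp
qed

lemma gamma_zero_component_less_1:
  assumes "\<And>j. 0 \<le> v $ j" "\<gamma> v = 1" "0 < v $ i"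
  shows "\<gamma> (\<chi> j. if j = i then 0 else v $ j) < 1"
proof -
  let ?w = "\<chi> j. if j = i then 0 else v $ j"
  have le: "\<And>j. 0 \<le> ?w $ j" "\<And>j. ?w $ j \<le> v $ j" using assms(1) by auto
  then have "\<gamma> ?w \<le> 1" using assms(2) gamma_mono[OF le] by simp
  moreover have "?w \<noteq> v" using assms(3) by (auto simp: vec_eq_iff)
  then have "\<gamma> ?w \<noteq> 1" using eq_if_le_and_gamma_eq_1[OF le _ assms(2)] by blast
  ultimately show ?thesis by simp
qed

lemma tendsto_if_gamma_midpoint_tendsto_1:
  assumes "\<And>n i. 0 \<le> a n $ i" "\<And>n. \<gamma> (a n) = 1" "\<gamma> b = 1"
    and "(\<lambda>n. \<gamma> ((1/2) *\<^sub>R (a n + b))) \<longlonglongrightarrow> 1"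
  shows "a \<longlonglongrightarrow> b"
proof (rule LIMSEQ_if_bounded_and_subseq_limits_eq)
  show "bounded (range a)"
    using assms(1,2) by (intro bounded_subset[OF bounded_nonneg_gamma_le_1]) auto
next
  fix r :: "nat \<Rightarrow> nat" and l assume r: "strict_mono r" and l: "(\<lambda>n. a (r n)) \<longlonglongrightarrow> l"
  have "(\<lambda>n. \<gamma> (a (r n))) \<longlonglongrightarrow> \<gamma> l" using l by (rule tendsto_gamma)
  then have "\<gamma> l = 1" using assms(2) by (simp add: LIMSEQ_const_iff)
  have "(\<lambda>n. \<gamma> ((1/2) *\<^sub>R (a (r n) + b))) \<longlonglongrightarrow> \<gamma> ((1/2) *\<^sub>R (l + b))"
    by (intro tendsto_gamma tendsto_intros l)
  moreover have "(\<lambda>n. \<gamma> ((1/2) *\<^sub>R (a (r n) + b))) \<longlonglongrightarrow> 1"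
    using LIMSEQ_subseq_LIMSEQ[OF assms(4) r] by (simp add: o_def)
  ultimately have "\<gamma> ((1/2) *\<^sub>R (l + b)) = 1" using LIMSEQ_unique by blast
  then show "l = b" using gamma_midpoint_less_1[OF \<open>\<gamma> l = 1\<close> assms(3)] by force
qed

lemma tendsto_if_dominated_and_gamma_tendsto_1:
  assumes "\<And>n i. 0 \<le> c n $ i" "\<And>n i. c n $ i \<le> d n $ i" "d \<longlonglongrightarrow> b"
    and "(\<lambda>n. \<gamma> (c n)) \<longlonglongrightarrow> 1" "\<gamma> b = 1"
  shows "c \<longlonglongrightarrow> b"
proof (rule LIMSEQ_if_bounded_and_subseq_limits_eq)
  obtain B where "\<And>n. norm (d n) \<le> B"
    using convergent_imp_bounded[OF assms(3)] unfolding bounded_iff by blast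
  moreover have "norm (c n) \<le> norm (d n)" for n
    by (intro norm_le_componentwise_cart) (simp add: assms(1,2) order_trans[OF assms(1) assms(2)])
  ultimately show "bounded (range c)" unfolding bounded_iff by (blast intro: order_trans)
next
  fix r :: "nat \<Rightarrow> nat" and l assume r: "strict_mono r" and l: "(\<lambda>n. c (r n)) \<longlonglongrightarrow> l"
  have "(\<lambda>n. \<gamma> (c (r n))) \<longlonglongrightarrow> \<gamma> l" using l by (rule tendsto_gamma)
  moreover have "(\<lambda>n. \<gamma> (c (r n))) \<longlonglongrightarrow> 1"
    using LIMSEQ_subseq_LIMSEQ[OF assms(4) r] by (simp add: o_def)
  ultimately have "\<gamma> l = 1" using LIMSEQ_unique by blast
  have "0 \<le> l $ i" for i
    by (rule LIMSEQ_le_const[OF tendsto_vec_nth[OF l]]) (simp add: assms(1))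
  moreover have "l $ i \<le> b $ i" for i
  proof (rule LIMSEQ_le[OF tendsto_vec_nth[OF l]])
    show "(\<lambda>n. d (r n) $ i) \<longlonglongrightarrow> b $ i"
      using LIMSEQ_subseq_LIMSEQ[OF tendsto_vec_nth[OF assms(3)] r] by (simp add: o_def)
  qed (simp add: assms(2))
  ultimately show "l = b" using eq_if_le_and_gamma_eq_1 \<open>\<gamma> l = 1\<close> assms(5) by blast
qed

end

section \<open>Functionals on \<open>l\<^sub>\<gamma>\<^sup>N(X)\<close>\<close>

definition coordinate_norms :: "('a::real_normed_vector)^'n \<Rightarrow> real^'n" where
  "coordinate_norms v = (\<chi> j. norm (v $ j))"

lemma coordinate_norms_nth [simp]: "coordinate_norms v $ j = norm (v $ j)"
  by (simp add: coordinate_norms_def)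

lemma lgamma_norm_eq: "lgamma_norm \<gamma> v = \<gamma> (coordinate_norms v)"
  by (simp add: lgamma_norm_def coordinate_norms_def)

lemma linear_axis: "linear (axis i :: 'a::real_vector \<Rightarrow> 'a^'n)"
  by (intro linearI) (simp_all add: vec_eq_iff axis_def)

lemma linear_eq_sum_axis:
  fixes H :: "('a::real_vector)^'n \<Rightarrow> 'b::real_vector"
  assumes "linear H"
  shows "H y = (\<Sum>j\<in>UNIV. H (axis j (y $ j)))"
proof -
  have "y = (\<Sum>j\<in>UNIV. axis j (y $ j))" by (simp add: vec_eq_iff axis_def)
  then have "H y = H (\<Sum>j\<in>UNIV. axis j (y $ j))" by simp
  also have "\<dots> = (\<Sum>j\<in>UNIV. H (axis j (y $ j)))" by (rule linear_sum[OF assms])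
  finally show ?thesis .
qed

context monotone_strictly_convex_norm
begin

lemma nonneg_homogeneous_lgamma_norm:
  "nonneg_homogeneous (lgamma_norm \<gamma> :: ('a::real_normed_vector)^'n \<Rightarrow> real)"
proof -
  have "coordinate_norms (c *\<^sub>R v) = \<bar>c\<bar> *\<^sub>R coordinate_norms v" for c and v :: "'a^'n"
    by (simp add: vec_eq_iff)
  then show ?thesis
    unfolding nonneg_homogeneous_def lgamma_norm_eq by (simp add: gamma_nonneg gamma_scaleR)
qed

lemma lgamma_norm_axis: "lgamma_norm \<gamma> (axis i (v::'a::real_normed_vector)) = norm v * \<gamma> (axis i 1)"
proof -
  have "coordinate_norms (axis i v) = axis i (norm v)" by (simp add: vec_eq_iff axis_def)
  then show ?thesis using gamma_axis[of i "norm v"] by (simp add: lgamma_norm_eq)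
qed

lemma lgamma_norm_le_gamma:
  "(\<And>j. norm (y $ j) \<le> a $ j) \<Longrightarrow> lgamma_norm \<gamma> (y::('a::real_normed_vector)^'n) \<le> \<gamma> a"
  unfolding lgamma_norm_eq by (rule gamma_mono) auto

lemma nrm_bounded_functional_axis:
  fixes H :: "('a::real_normed_vector)^'n \<Rightarrow> real"
  assumes "nrm_bounded_functional (lgamma_norm \<gamma>) H"
  shows "nrm_bounded_functional norm (\<lambda>v. H (axis i v))"
proof -
  obtain C where lin: "linear H" and C: "\<And>y. \<bar>H y\<bar> \<le> C * lgamma_norm \<gamma> y"
    using assms unfolding nrm_bounded_functional_def by blast
  have "linear (\<lambda>v. H (axis i v))"
    using linear_compose[OF linear_axis lin] by (simp add: o_def)
  moreover have "\<bar>H (axis i v)\<bar> \<le> (C * \<gamma> (axis i 1)) * norm v" for v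
    using C[of "axis i v"] by (simp add: lgamma_norm_axis mult_ac)
  ultimately show ?thesis unfolding nrm_bounded_functional_def by blast
qed

lemma functional_axis_le:
  fixes H :: "('a::real_normed_vector)^'n \<Rightarrow> real"
  assumes "nrm_bounded_functional (lgamma_norm \<gamma>) H"
  shows "H (axis j v) \<le> dual_norm norm (\<lambda>v. H (axis j v)) * norm v"
  using abs_le_dual_norm_mult[OF nrm_bounded_functional_axis[OF assms] nonneg_homogeneous_norm]
  by (meson abs_ge_self order_trans)

lemma sum_component_dual_norms_le:
  fixes H :: "('a::real_normed_vector)^'n \<Rightarrow> real"
  assumes H: "nrm_bounded_functional (lgamma_norm \<gamma>) H" "dual_norm (lgamma_norm \<gamma>) H \<le> 1"
    and nonneg: "\<And>j. 0 \<le> a $ j"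
  shows "(\<Sum>j\<in>UNIV. dual_norm norm (\<lambda>v. H (axis j v)) * a $ j) \<le> \<gamma> a"
proof -
  let ?\<psi> = "\<lambda>j. dual_norm norm (\<lambda>v. H (axis j v))"
  have lin: "linear H" using H(1) by (rule nrm_bounded_functional_linear)
  have approx: "(\<Sum>j\<in>UNIV. ?\<psi> j * a $ j) \<le> \<gamma> a + \<epsilon> * (\<Sum>j\<in>UNIV. a $ j)" if "0 < \<epsilon>" for \<epsilon>
  proof -
    have "\<forall>j. \<exists>v. norm v \<le> 1 \<and> ?\<psi> j - \<epsilon> < H (axis j v)"
      using dual_norm_approx[OF nrm_bounded_functional_axis[OF H(1)] nonneg_homogeneous_norm that]
      by metis
    then obtain V where V: "\<And>j. norm (V j) \<le> 1" "\<And>j. ?\<psi> j - \<epsilon> < H (axis j (V j))"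
      by metis
    \<comment> \<open>Test \<open>H\<close> on the vector with coordinates \<open>a\<^sub>j V\<^sub>j\<close>, where \<open>V\<^sub>j\<close> almost norms
      \<open>H (axis j \<cdot>)\<close>.\<close>
    define y where "y = (\<chi> j. a $ j *\<^sub>R V j)"
    have "(\<Sum>j\<in>UNIV. a $ j * (?\<psi> j - \<epsilon>)) \<le> (\<Sum>j\<in>UNIV. a $ j * H (axis j (V j)))"
      using V(2) nonneg by (intro sum_mono mult_left_mono) (auto simp: less_imp_le)
    also have "\<dots> = H y"
      using linear_eq_sum_axis[OF lin, of y]
      by (simp add: y_def linear_scale[OF linear_axis] linear_scale[OF lin])
    also have "\<dots> \<le> dual_norm (lgamma_norm \<gamma>) H * lgamma_norm \<gamma> y"
      using abs_le_dual_norm_mult[OF H(1) nonneg_homogeneous_lgamma_norm] abs_ge_self order_trans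
      by blast
    also have "\<dots> \<le> lgamma_norm \<gamma> y"
      using H(2) nonneg_homogeneous_lgamma_norm mult_right_mono[of _ 1 "lgamma_norm \<gamma> y"]
      unfolding nonneg_homogeneous_def by fastforce
    also have "\<dots> \<le> \<gamma> a"
      using V(1) nonneg by (intro lgamma_norm_le_gamma) (simp add: y_def mult_left_le)
    finally show ?thesis
      by (simp add: sum_subtractf sum_distrib_left algebra_simps)
  qed
  show ?thesis
  proof (rule field_le_epsilon)
    fix e :: real assume "0 < e"
    define S where "S = (\<Sum>j\<in>UNIV. a $ j)"
    have "0 \<le> S" unfolding S_def using nonneg by (simp add: sum_nonneg)
    then have "(\<Sum>j\<in>UNIV. ?\<psi> j * a $ j) \<le> \<gamma> a + e / (S + 1) * S"
      using approx[of "e / (S + 1)"] \<open>0 < e\<close> by (simp add: S_def)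
    also have "e / (S + 1) * S \<le> e" using \<open>0 < e\<close> \<open>0 \<le> S\<close> by (simp add: field_simps)
    finally show "(\<Sum>j\<in>UNIV. ?\<psi> j * a $ j) \<le> \<gamma> a + e" by simp
  qed
qed

lemma functional_le_component_add_gamma_rest:
  fixes H :: "('a::real_normed_vector)^'n \<Rightarrow> real"
  assumes H: "nrm_bounded_functional (lgamma_norm \<gamma>) H" "dual_norm (lgamma_norm \<gamma>) H \<le> 1"
  shows "H y \<le> dual_norm norm (\<lambda>v. H (axis i v)) * norm (y $ i)
    + \<gamma> (\<chi> j. if j = i then 0 else norm (y $ j))"
proof -
  let ?\<psi> = "\<lambda>j. dual_norm norm (\<lambda>v. H (axis j v))"
  define z where "z = (\<chi> j. if j = i then 0 else norm (y $ j))"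
  have "(\<Sum>j\<in>UNIV. ?\<psi> j * z $ j) = (\<Sum>j\<in>UNIV - {i}. ?\<psi> j * z $ j)"
    using sum.remove[of UNIV i "\<lambda>j. ?\<psi> j * z $ j"] by (simp add: z_def)
  also have "\<dots> = (\<Sum>j\<in>UNIV - {i}. ?\<psi> j * norm (y $ j))"
    by (rule sum.cong) (auto simp: z_def)
  finally have split:
    "(\<Sum>j\<in>UNIV. ?\<psi> j * norm (y $ j)) = ?\<psi> i * norm (y $ i) + (\<Sum>j\<in>UNIV. ?\<psi> j * z $ j)"
    using sum.remove[of UNIV i "\<lambda>j. ?\<psi> j * norm (y $ j)"] by simp
  have "H y = (\<Sum>j\<in>UNIV. H (axis j (y $ j)))"
    by (rule linear_eq_sum_axis[OF nrm_bounded_functional_linear[OF H(1)]])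
  also have "\<dots> \<le> (\<Sum>j\<in>UNIV. ?\<psi> j * norm (y $ j))"
    by (intro sum_mono functional_axis_le[OF H(1)])
  also have "\<dots> \<le> ?\<psi> i * norm (y $ i) + \<gamma> z"
    unfolding split using sum_component_dual_norms_le[OF H, of z] by (simp add: z_def)
  finally show ?thesis by (simp add: z_def)
qed

lemma component_defect_le:
  fixes H :: "('a::real_normed_vector)^'n \<Rightarrow> real"
  assumes H: "nrm_bounded_functional (lgamma_norm \<gamma>) H" "dual_norm (lgamma_norm \<gamma>) H \<le> 1"
  shows "dual_norm norm (\<lambda>v. H (axis i v)) * norm (y $ i) - H (axis i (y $ i))
    \<le> lgamma_norm \<gamma> y - H y"
proof -
  let ?\<psi> = "\<lambda>j. dual_norm norm (\<lambda>v. H (axis j v))"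
  have "?\<psi> i * norm (y $ i) - H (axis i (y $ i))
      \<le> (\<Sum>j\<in>UNIV. ?\<psi> j * norm (y $ j) - H (axis j (y $ j)))"
    by (rule member_le_sum) (auto simp: functional_axis_le[OF H(1)])
  also have "\<dots> = (\<Sum>j\<in>UNIV. ?\<psi> j * norm (y $ j)) - H y"
    by (simp add: sum_subtractf linear_eq_sum_axis[OF nrm_bounded_functional_linear[OF H(1)], of y])
  also have "\<dots> \<le> lgamma_norm \<gamma> y - H y"
    using sum_component_dual_norms_le[OF H, of "coordinate_norms y"] by (simp add: lgamma_norm_eq)
  finally show ?thesis .
qed

lemma tau_conv_lgamma_norm_if_components:
  fixes xs :: "nat \<Rightarrow> ('a::real_normed_vector)^'n"
  assumes components: "\<And>i. tau_conv t norm (\<lambda>n. xs n $ i) (x $ i)"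
  shows "tau_conv t (lgamma_norm \<gamma>) xs x"
proof (cases t)
  case NormTop
  have "(\<lambda>n. coordinate_norms (xs n - x)) \<longlonglongrightarrow> 0"
    using components NormTop
    by (intro vec_tendstoI) (simp add: tau_conv_def)
  then have "(\<lambda>n. \<gamma> (coordinate_norms (xs n - x))) \<longlonglongrightarrow> \<gamma> 0"
    by (rule tendsto_gamma)
  then show ?thesis using NormTop gamma_eq_0_iff[of 0] by (simp add: tau_conv_def lgamma_norm_eq)
next
  case WeakTop
  have "(\<lambda>n. H (xs n)) \<longlonglongrightarrow> H x" if H: "nrm_bounded_functional (lgamma_norm \<gamma>) H" for H
  proof -
    have lin: "linear H" using H by (rule nrm_bounded_functional_linear)
    have "(\<lambda>n. H (axis i (xs n $ i))) \<longlonglongrightarrow> H (axis i (x $ i))" for i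
    proof -
      have "\<forall>h. nrm_bounded_functional norm h \<longrightarrow> (\<lambda>n. h (xs n $ i)) \<longlonglongrightarrow> h (x $ i)"
        using components[of i] WeakTop by (simp add: tau_conv_WeakTop_iff)
      from this[rule_format, OF nrm_bounded_functional_axis[OF H]] show ?thesis .
    qed
    then have "(\<lambda>n. \<Sum>i\<in>UNIV. H (axis i (xs n $ i))) \<longlonglongrightarrow> (\<Sum>i\<in>UNIV. H (axis i (x $ i)))"
      by (rule tendsto_sum)
    then show ?thesis by (simp flip: linear_eq_sum_axis[OF lin])
  qed
  then show ?thesis using WeakTop by (simp add: tau_conv_def)
qed

end

section \<open>Convergence of the coordinates\<close>

locale lgamma_ALUR_premises = monotone_strictly_convex_norm \<gamma> for \<gamma> :: "real^'n \<Rightarrow> real" +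
  fixes x :: "('a::real_normed_vector)^'n" and xs :: "nat \<Rightarrow> 'a^'n"
    and hs :: "nat \<Rightarrow> 'a^'n \<Rightarrow> real" and L :: "nat \<Rightarrow> real"
  assumes lgamma_norm_x: "lgamma_norm \<gamma> x = 1"
    and lgamma_norm_xs: "\<And>n. lgamma_norm \<gamma> (xs n) = 1"
    and dual_sphere_hs: "\<And>m. dual_sphere (lgamma_norm \<gamma>) (hs m)"
    and inner_limits: "\<And>m. (\<lambda>n. hs m ((1/2) *\<^sub>R (xs n + x))) \<longlonglongrightarrow> L m"
    and L_tendsto_1: "L \<longlonglongrightarrow> 1"
begin

abbreviation mid :: "nat \<Rightarrow> 'a^'n" where
  "mid n \<equiv> (1/2) *\<^sub>R (xs n + x)"

lemma hs_bounded: "nrm_bounded_functional (lgamma_norm \<gamma>) (hs m)"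
  and dual_norm_hs: "dual_norm (lgamma_norm \<gamma>) (hs m) = 1"
  using dual_sphere_hs[of m] by (auto simp: dual_sphere_def)

lemma gamma_norms_x: "\<gamma> (coordinate_norms x) = 1"
  using lgamma_norm_x by (simp add: lgamma_norm_eq)

lemma gamma_norms_mid_le_avg:
  "\<gamma> (coordinate_norms (mid n)) \<le> \<gamma> ((1/2) *\<^sub>R (coordinate_norms (xs n) + coordinate_norms x))"
  by (rule gamma_mono) (simp_all add: norm_triangle_ineq)

lemma gamma_norms_avg_le_1: "\<gamma> ((1/2) *\<^sub>R (coordinate_norms (xs n) + coordinate_norms x)) \<le> 1"
  using gamma_midpoint_le[of "coordinate_norms (xs n)" "coordinate_norms x"]
    lgamma_norm_xs[of n] gamma_norms_x
  by (simp add: lgamma_norm_eq)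

lemma hs_mid_le: "hs m (mid n) \<le> lgamma_norm \<gamma> (mid n)"
  using abs_le_dual_norm_mult[OF hs_bounded nonneg_homogeneous_lgamma_norm, of m "mid n"]
  by (simp add: dual_norm_hs)

lemma gamma_norms_mid_tendsto_1: "(\<lambda>n. \<gamma> (coordinate_norms (mid n))) \<longlonglongrightarrow> 1"
proof (rule order_tendstoI)
  fix a :: real assume "a < 1"
  then obtain m where "a < L m"
    using order_tendstoD(1)[OF L_tendsto_1] by (meson eventually_sequentially order_refl)
  then have "\<forall>\<^sub>F n in sequentially. a < hs m (mid n)"
    by (rule order_tendstoD(1)[OF inner_limits])
  then show "\<forall>\<^sub>F n in sequentially. a < \<gamma> (coordinate_norms (mid n))"
    by (rule eventually_mono) (use hs_mid_le in \<open>auto simp: lgamma_norm_eq intro: less_le_trans\<close>)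
next
  fix a :: real assume "1 < a"
  then show "\<forall>\<^sub>F n in sequentially. \<gamma> (coordinate_norms (mid n)) < a"
    using gamma_norms_mid_le_avg gamma_norms_avg_le_1
    by (intro always_eventually) (meson le_less_trans)
qed

lemma coordinate_norms_xs_tendsto: "(\<lambda>n. coordinate_norms (xs n)) \<longlonglongrightarrow> coordinate_norms x"
proof (rule tendsto_if_gamma_midpoint_tendsto_1)
  show "\<gamma> (coordinate_norms (xs n)) = 1" for n
    using lgamma_norm_xs by (simp add: lgamma_norm_eq)
  show "(\<lambda>n. \<gamma> ((1/2) *\<^sub>R (coordinate_norms (xs n) + coordinate_norms x))) \<longlonglongrightarrow> 1"
    by (rule real_tendsto_sandwich[OF _ _ gamma_norms_mid_tendsto_1 tendsto_const])
      (use gamma_norms_mid_le_avg gamma_norms_avg_le_1 in \<open>auto intro: always_eventually\<close>)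
qed (simp_all add: gamma_norms_x)

lemma coordinate_norms_mid_tendsto: "(\<lambda>n. coordinate_norms (mid n)) \<longlonglongrightarrow> coordinate_norms x"
proof (rule tendsto_if_dominated_and_gamma_tendsto_1)
  show "(\<lambda>n. (1/2) *\<^sub>R (coordinate_norms (xs n) + coordinate_norms x)) \<longlonglongrightarrow> coordinate_norms x"
    using tendsto_scaleR[OF tendsto_const tendsto_add[OF coordinate_norms_xs_tendsto tendsto_const],
        of "1/2" "coordinate_norms x"]
    by (simp add: scaleR_2[symmetric])
qed (simp_all add: norm_triangle_ineq gamma_norms_mid_tendsto_1 gamma_norms_x)

lemma component_dual_norm_lower_bound:
  "L m - \<gamma> (\<chi> j. if j = i then 0 else norm (x $ j))
    \<le> dual_norm norm (\<lambda>v. hs m (axis i v)) * norm (x $ i)"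
proof -
  let ?\<psi> = "dual_norm norm (\<lambda>v. hs m (axis i v))"
  let ?rest = "\<lambda>y::'a^'n. \<chi> j. if j = i then 0 else norm (y $ j)"
  have "(\<lambda>n. ?rest (mid n)) \<longlonglongrightarrow> ?rest x"
    using tendsto_vec_nth[OF coordinate_norms_mid_tendsto] by (intro tendsto_vec_lambda) simp
  then have "(\<lambda>n. hs m (mid n) - \<gamma> (?rest (mid n))) \<longlonglongrightarrow> L m - \<gamma> (?rest x)"
    by (intro tendsto_diff inner_limits tendsto_gamma)
  moreover have "(\<lambda>n. ?\<psi> * norm (mid n $ i)) \<longlonglongrightarrow> ?\<psi> * norm (x $ i)"
    using tendsto_vec_nth[OF coordinate_norms_mid_tendsto, of i] by (intro tendsto_mult_left) simp
  moreover have "hs m (mid n) - \<gamma> (?rest (mid n)) \<le> ?\<psi> * norm (mid n $ i)" for n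
    using functional_le_component_add_gamma_rest[OF hs_bounded, of m "mid n" i] dual_norm_hs by simp
  ultimately show ?thesis by (intro LIMSEQ_le) auto
qed

lemma exists_component_dual_norm_large:
  assumes "0 < norm (x $ i)" "0 < \<epsilon>"
  obtains m where "0 < dual_norm norm (\<lambda>v. hs m (axis i v))"
    and "1 - L m < \<epsilon> * (dual_norm norm (\<lambda>v. hs m (axis i v)) * norm (x $ i))"
proof -
  \<comment> \<open>\<open>\<delta> > 0\<close> by strict convexity and \<open>\<psi>\<^sub>m \<beta> \<ge> \<delta> - (1 - L m)\<close>, so it suffices to take
    \<open>m\<close> with \<open>(1 - L m) (1 + \<epsilon>) < \<epsilon> \<delta>\<close>.\<close>
  define \<delta> where "\<delta> = 1 - \<gamma> (\<chi> j. if j = i then 0 else norm (x $ j))"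
  have "0 < \<delta>"
    using gamma_zero_component_less_1[of "coordinate_norms x" i] gamma_norms_x assms(1)
    by (simp add: \<delta>_def cong: if_cong)
  then have "0 < \<epsilon> * \<delta> / (1 + \<epsilon>)" using assms(2) by simp
  then have "\<forall>\<^sub>F m in sequentially. 1 - \<epsilon> * \<delta> / (1 + \<epsilon>) < L m"
    using order_tendstoD(1)[OF L_tendsto_1] by simp
  then obtain m where "1 - \<epsilon> * \<delta> / (1 + \<epsilon>) < L m"
    by (meson eventually_sequentially order_refl)
  then have m: "1 - L m < \<epsilon> * \<delta> / (1 + \<epsilon>)" by simp
  define q where "q = 1 - L m"
  define p where "p = dual_norm norm (\<lambda>v. hs m (axis i v)) * norm (x $ i)"
  have lower: "\<delta> - q \<le> p"
    using component_dual_norm_lower_bound[of m i] by (simp add: p_def q_def \<delta>_def)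
  have q: "q * (1 + \<epsilon>) < \<epsilon> * \<delta>"
    using m assms(2) by (simp add: q_def pos_less_divide_eq)
  have "q < \<delta>"
  proof (rule ccontr)
    assume "\<not> q < \<delta>"
    then have "\<delta> * (1 + \<epsilon>) \<le> q * (1 + \<epsilon>)" using assms(2) by (intro mult_right_mono) auto
    then show False using q \<open>0 < \<delta>\<close> by (simp add: algebra_simps)
  qed
  then have "0 < p" using lower by linarith
  then have "0 < dual_norm norm (\<lambda>v. hs m (axis i v))"
    using assms(1) by (simp add: p_def zero_less_mult_iff)
  moreover have "q < \<epsilon> * p"
    using q mult_left_mono[OF lower less_imp_le[OF assms(2)]] by (simp add: algebra_simps)
  ultimately show ?thesis using that by (simp add: p_def q_def)
qed

lemma dual_sphere_normalized_component:
  assumes "0 < dual_norm norm (\<lambda>v. hs m (axis i v))"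
  shows "dual_sphere norm (\<lambda>v. hs m (axis i v) / dual_norm norm (\<lambda>v. hs m (axis i v)))"
  by (rule dual_sphere_normalize[OF nrm_bounded_functional_axis[OF hs_bounded]
        nonneg_homogeneous_norm assms])

lemma component_functional_midpoint_lower_bound:
  fixes m n :: nat and i :: 'n
  defines "\<psi> \<equiv> dual_norm norm (\<lambda>v. hs m (axis i v))"
  assumes "0 < \<psi>" and "norm w = 1" "xs n $ i = norm (xs n $ i) *\<^sub>R w" "x $ i = norm (x $ i) *\<^sub>R u"
  shows "norm (mid n $ i) - (1 - hs m (mid n)) / \<psi> - \<bar>norm (x $ i) - norm (xs n $ i)\<bar> / 2
    \<le> norm (x $ i) * (hs m (axis i ((1/2) *\<^sub>R (w + u))) / \<psi>)"
proof -
  define g where "g v = hs m (axis i v) / \<psi>" for v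
  have "\<psi> * norm (mid n $ i) - \<psi> * g (mid n $ i) \<le> lgamma_norm \<gamma> (mid n) - hs m (mid n)"
    using component_defect_le[OF hs_bounded, of m i "mid n"] assms(2)
    by (simp add: dual_norm_hs g_def \<psi>_def)
  moreover have "lgamma_norm \<gamma> (mid n) \<le> 1"
    using gamma_norms_mid_le_avg[of n] gamma_norms_avg_le_1[of n] by (simp add: lgamma_norm_eq)
  ultimately have "\<psi> * (norm (mid n $ i) - g (mid n $ i)) \<le> 1 - hs m (mid n)"
    by (simp add: right_diff_distrib)
  then have "norm (mid n $ i) - g (mid n $ i) \<le> (1 - hs m (mid n)) / \<psi>"
    using assms(2) by (simp add: pos_le_divide_eq mult.commute)
  then have "norm (mid n $ i) - (1 - hs m (mid n)) / \<psi> \<le> g (mid n $ i)"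
    by linarith
  moreover have "mid n $ i = (1/2) *\<^sub>R (norm (xs n $ i) *\<^sub>R w + norm (x $ i) *\<^sub>R u)"
    using assms(4,5) by simp
  moreover have "dual_sphere norm g"
    using dual_sphere_normalized_component assms(2) by (simp add: g_def[abs_def] \<psi>_def)
  ultimately show ?thesis
    using midpoint_functional_lower_bound[of g w "norm (xs n $ i)" "norm (x $ i)" u] assms(3)
    by (simp add: g_def)
qed

lemma eventually_norming_functional_component:
  assumes pos: "0 < norm (x $ i)" and "0 < \<epsilon>"
    and us: "\<And>n. norm (us n) = 1" "\<And>n. xs n $ i = norm (xs n $ i) *\<^sub>R us n"
    and u: "x $ i = norm (x $ i) *\<^sub>R u"
  shows "\<exists>g. dual_sphere norm g \<and> (\<forall>\<^sub>F n in sequentially. 1 - \<epsilon> < g ((1/2) *\<^sub>R (us n + u)))"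
proof -
  define \<beta> where "\<beta> = norm (x $ i)"
  obtain m where \<psi>_pos: "0 < dual_norm norm (\<lambda>v. hs m (axis i v))"
    and m: "1 - L m < \<epsilon> * (dual_norm norm (\<lambda>v. hs m (axis i v)) * \<beta>)"
    using exists_component_dual_norm_large[OF pos \<open>0 < \<epsilon>\<close>] unfolding \<beta>_def by blast
  define \<psi> where "\<psi> = dual_norm norm (\<lambda>v. hs m (axis i v))"
  have \<psi>: "0 < \<psi>" "1 - L m < \<epsilon> * (\<psi> * \<beta>)"
    using \<psi>_pos m by (simp_all add: \<psi>_def)
  define g where "g v = hs m (axis i v) / \<psi>" for v
  define lower where
    "lower n = norm (mid n $ i) - (1 - hs m (mid n)) / \<psi> - \<bar>\<beta> - norm (xs n $ i)\<bar> / 2" for n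
  have lower_le: "lower n \<le> \<beta> * g ((1/2) *\<^sub>R (us n + u))" for n
    using component_functional_midpoint_lower_bound[OF \<psi>_pos us(1)[of n] us(2)[of n] u]
    by (simp add: lower_def g_def \<psi>_def \<beta>_def)
  have "(\<lambda>n. norm (mid n $ i)) \<longlonglongrightarrow> \<beta>" "(\<lambda>n. norm (xs n $ i)) \<longlonglongrightarrow> \<beta>"
    using tendsto_vec_nth[OF coordinate_norms_mid_tendsto, of i]
      tendsto_vec_nth[OF coordinate_norms_xs_tendsto, of i] by (simp_all add: \<beta>_def)
  then have lower_tendsto: "lower \<longlonglongrightarrow> \<beta> - (1 - L m) / \<psi> - \<bar>\<beta> - \<beta>\<bar> / 2"
    unfolding lower_def using \<psi>(1)
    by (intro tendsto_diff tendsto_divide tendsto_rabs tendsto_const inner_limits) simp_all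
  have "\<beta> * (1 - \<epsilon>) < \<beta> - (1 - L m) / \<psi> - \<bar>\<beta> - \<beta>\<bar> / 2"
    using \<psi> by (simp add: field_simps)
  from order_tendstoD(1)[OF lower_tendsto this]
  have "\<forall>\<^sub>F n in sequentially. \<beta> * (1 - \<epsilon>) < \<beta> * g ((1/2) *\<^sub>R (us n + u))"
    by (rule eventually_mono) (use lower_le in \<open>blast intro: less_le_trans\<close>)
  then have "\<forall>\<^sub>F n in sequentially. 1 - \<epsilon> < g ((1/2) *\<^sub>R (us n + u))"
    by (rule eventually_mono) (use pos in \<open>simp add: \<beta>_def\<close>)
  moreover have "dual_sphere norm g"
    using dual_sphere_normalized_component[OF \<psi>_pos] by (simp add: g_def[abs_def] \<psi>_def)
  ultimately show ?thesis by blast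
qed

lemma component_tau_conv:
  assumes ALUR: "tau_ALUR t (norm :: 'a \<Rightarrow> real)"
  shows "tau_conv t norm (\<lambda>n. xs n $ i) (x $ i)"
proof (cases "x $ i = 0")
  case True
  have "(\<lambda>n. norm (xs n $ i)) \<longlonglongrightarrow> 0"
    using tendsto_vec_nth[OF coordinate_norms_xs_tendsto, of i] True by simp
  then show ?thesis using True by (intro tau_conv_if_tendsto) (simp add: tendsto_norm_zero_iff)
next
  case False
  define u where "u = sgn (x $ i)"
  \<comment> \<open>The directions must be unit vectors for \<open>\<tau>\<close>-ALUR, also where \<open>xs n $ i = 0\<close>.\<close>
  define us where "us n = (if xs n $ i = 0 then u else sgn (xs n $ i))" for n
  have norm_us: "norm (us n) = 1" for n
    using False by (simp add: us_def u_def norm_sgn)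
  have xs_eq: "xs n $ i = norm (xs n $ i) *\<^sub>R us n" for n
    by (simp add: us_def sgn_div_norm)
  have x_eq: "x $ i = norm (x $ i) *\<^sub>R u"
    by (simp add: u_def sgn_div_norm False)
  have "tau_conv t norm us u"
  proof (rule tau_ALUR_tau_conv_if_norming[OF ALUR _ norm_us])
    show "norm u = 1" using False by (simp add: u_def norm_sgn)
    fix \<epsilon> :: real assume "0 < \<epsilon>"
    then show "\<exists>g. dual_sphere norm g \<and> (\<forall>\<^sub>F n in sequentially. 1 - \<epsilon> < g ((1/2) *\<^sub>R (us n + u)))"
      using False
      by (intro eventually_norming_functional_component[OF _ _ norm_us xs_eq x_eq]) simp_all
  qed
  then have "tau_conv t norm (\<lambda>n. norm (xs n $ i) *\<^sub>R us n) (norm (x $ i) *\<^sub>R u)"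
    using tendsto_vec_nth[OF coordinate_norms_xs_tendsto, of i] by (intro tau_conv_scaleR) simp_all
  then show ?thesis by (simp flip: xs_eq x_eq)
qed

end

theorem theorem3p5:
  fixes t :: topo and \<gamma> :: "real^'n \<Rightarrow> real"
  assumes "tau_ALUR t (norm :: 'a::banach \<Rightarrow> real)"
    and "is_norm_fun \<gamma>" and "monotone_norm \<gamma>" and "strictly_convex_norm \<gamma>"
  shows "tau_ALUR t (lgamma_norm \<gamma> :: 'a^'n \<Rightarrow> real)"
proof -
  interpret monotone_strictly_convex_norm \<gamma>
    using assms(2-4) by unfold_locales
  show ?thesis
    unfolding tau_ALUR_def
  proof (intro allI impI, elim conjE exE)
    fix x :: "'a^'n" and xs hs L
    assume "lgamma_norm \<gamma> x = 1" "\<forall>n. lgamma_norm \<gamma> (xs n) = 1"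
      "\<forall>m. dual_sphere (lgamma_norm \<gamma>) (hs m)"
      "\<forall>m. (\<lambda>n. hs m ((1/2) *\<^sub>R (xs n + x))) \<longlonglongrightarrow> L m" "L \<longlonglongrightarrow> 1"
    then interpret lgamma_ALUR_premises \<gamma> x xs hs L
      by unfold_locales auto
    show "tau_conv t (lgamma_norm \<gamma>) xs x"
      using component_tau_conv[OF assms(1)] by (rule tau_conv_lgamma_norm_if_components)
  qed
qed

end
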